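(* Let $(\mathbf{S}^1, A^1, U^1, \mathbf{S}^2,\ldots)$ be a process as in the context satisfying (A0) and (C1)–(C3), and let $\phi:\mathcal{S}\to\mathbb{R}^q$ be measurable, with $\mathbf{S}^t_\phi=\phi(\mathbf{S}^t)$ and $\mathbf{Y}^{t+1}=(U^t,(\mathbf{S}^{t+1})^\top)^\top$. Fix $t$ and suppose at least one of the following holds: (i) $\{\mathbf{Y}^{t+1}-\mathbb{E}(\mathbf{Y}^{t+1}\mid\mathbf{S}^t_\phi,A^t)\}\perp\!\!\!\perp\mathbf{S}^t\mid A^t$; (ii) $\{\mathbf{S}^t-\mathbb{E}(\mathbf{S}^t\mid\mathbf{S}^t_\phi)\}\perp\!\!\!\perp(\mathbf{Y}^{t+1},\mathbf{S}^t_\phi)\mid A^t$. Then $\mathbf{Y}^{t+1}\perp\!\!\!\perp\mathbf{S}^t\mid\mathbf{S}^t_\phi,A^t$.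
   Context: The process: $\mathbf{S}^t\in\mathcal{S}\subseteq\mathbb{R}^p$ are states, $A^t\in\mathcal{A}=\{1,\ldots,K\}$ decisions, and $U^t=U(\mathbf{S}^t,A^t,\mathbf{S}^{t+1})$ for a fixed deterministic measurable function $U$ with $\sup_t|U^t|\le M$ a.s. (so all conditional expectations above exist; the state $\mathbf{S}^t$ is assumed integrable). (A0): $P(\mathbf{S}^{t+1}\in\mathcal{G}\mid A^t,\mathbf{S}^t,\ldots,A^1,\mathbf{S}^1)=P(\mathbf{S}^{t+1}\in\mathcal{G}\mid A^t,\mathbf{S}^t)$ for all measurable $\mathcal{G}$, with the kernel independent of $t$. (C1)–(C3) are consistency, positivity and sequential ignorability of the potential-outcome model: (C1) $\mathbf{S}^t=\mathbf{S}^{*t}(A^1,\ldots,A^{t-1})$ where $\mathbf{S}^{*t}(\overline{\mathbf{a}}^{t-1})$ are potential states; (C2) $P(A^t=a\mid \mathbf{S}^1,\ldots,\mathbf{S}^t,A^1,\ldots,A^{t-1})\ge\epsilon>0$ a.s. for all $a$; (C3) the collection of all potential states is independent of $A^t$ given $(\mathbf{S}^1,\ldots,\mathbf{S}^t,A^1,\ldots,A^{t-1})$. *)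

theory Defs
  imports "HOL-Analysis.Analysis" "HOL-Probability.Probability"
begin

definition cond_exp_vec ::
  "'w measure \<Rightarrow> 'w measure \<Rightarrow> ('w \<Rightarrow> 'v::euclidean_space) \<Rightarrow> 'w \<Rightarrow> 'v" where
  "cond_exp_vec M F X = (\<lambda>\<omega>. \<Sum>b\<in>Basis. real_cond_exp M F (\<lambda>\<eta>. X \<eta> \<bullet> b) \<omega> *\<^sub>R b)"

definition cond_indep ::
  "'w measure \<Rightarrow> 'w measure \<Rightarrow> ('w \<Rightarrow> 'x) \<Rightarrow> 'x measure \<Rightarrow> ('w \<Rightarrow> 'y) \<Rightarrow> 'y measure \<Rightarrow> bool" where
  "cond_indep M F X MX Y MY \<longleftrightarrow>
     (\<forall>A\<in>sets MX. \<forall>B\<in>sets MY. AE \<omega> in M.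
        real_cond_exp M F (\<lambda>\<eta>. indicator A (X \<eta>) * indicator B (Y \<eta>)) \<omega> =
        real_cond_exp M F (\<lambda>\<eta>. indicator A (X \<eta>)) \<omega> * real_cond_exp M F (\<lambda>\<eta>. indicator B (Y \<eta>)) \<omega>)"

definition gen_sigma :: "'w measure \<Rightarrow> ('w \<Rightarrow> 'z) \<Rightarrow> 'z measure \<Rightarrow> 'w measure" where
  "gen_sigma M Z MZ = vimage_algebra (space M) Z MZ"

definition hist_sigma ::
  "'w measure \<Rightarrow> (nat \<Rightarrow> 'w \<Rightarrow> real^'p) \<Rightarrow> (nat \<Rightarrow> 'w \<Rightarrow> nat) \<Rightarrow> nat \<Rightarrow> nat \<Rightarrow> 'w measure" where
  "hist_sigma M S A n m =
     gen_sigma M (\<lambda>\<omega>. (\<lambda>i\<in>{1..n}. S i \<omega>, \<lambda>j\<in>{1..m}. A j \<omega>))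
       (Pi\<^sub>M {1..n} (\<lambda>_. borel) \<Otimes>\<^sub>M Pi\<^sub>M {1..m} (\<lambda>_. count_space UNIV))"

text \<open>Index set of all potential states S*^s(abar), abar \<in> {1..K}^(s-1).\<close>
definition pot_index :: "nat \<Rightarrow> (nat \<times> nat list) set" where
  "pot_index K = {(s, abar). 1 \<le> s \<and> length abar = s - 1 \<and> set abar \<subseteq> {1..K}}"

end

theory Submission
  imports Defs
begin

text \<open>Both alternatives give a residual \<open>R\<close> that is conditionally independent of the other
  variable given \<open>\<sigma>(A\<^sup>t)\<close> and that differs from the variable of interest only by a function \<open>V\<close>
  of \<open>H = \<sigma>(\<phi>(S\<^sup>t), A\<^sup>t)\<close>. Since \<open>H\<close> lies between \<open>\<sigma>(A\<^sup>t)\<close> and the join of \<open>\<sigma>(A\<^sup>t)\<close> with the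
  other variable, weak union upgrades the conditioning to \<open>H\<close>; and independence given \<open>H\<close>
  survives replacing \<open>R\<close> by any \<open>\<sigma>(R) \<or> H\<close>-measurable variable, in particular by \<open>R + V\<close>.
  Both facts follow from the characterisation of \<open>X \<perp> Z | F\<close> by
  \<open>E(1\<^sub>B(Z) | \<sigma>(X) \<or> F) = E(1\<^sub>B(Z) | F)\<close>. Only the \<open>H\<close>-measurability of the centring term
  is used, and none of the Markov or potential-outcome assumptions.\<close>

lemma prob_space_sigma_finite_subalgebra:
  assumes "prob_space M" "subalgebra M F"
  shows "sigma_finite_subalgebra M F"
proof -
  interpret prob_space M by fact
  have "finite_measure_subalgebra M F"
    by (simp add: assms(2) finite_measure_axioms finite_measure_subalgebra.intro
        finite_measure_subalgebra_axioms.intro)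
  then show ?thesis by (rule finite_measure_subalgebra_is_sigma_finite)
qed

lemma integrable_bounded_mult:
  fixes q h :: "'a \<Rightarrow> real"
  assumes "integrable M q" "h \<in> borel_measurable M" "AE x in M. \<bar>h x\<bar> \<le> 1"
  shows "integrable M (\<lambda>x. h x * q x)"
proof (rule Bochner_Integration.integrable_bound[OF assms(1)])
  show "(\<lambda>x. h x * q x) \<in> borel_measurable M"
    using borel_measurable_integrable[OF assms(1)] assms(2) by simp
  show "AE x in M. norm (h x * q x) \<le> norm (q x)"
    using assms(3) by eventually_elim (metis abs_ge_zero abs_mult mult_left_le_one_le real_norm_def)
qed

lemma set_integral_eq_on_sigma_sets:
  fixes f g :: "'a \<Rightarrow> real"
  assumes IS: "Int_stable G" and GP: "G \<subseteq> Pow (space M)" and top: "space M \<in> G"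
    and GM: "G \<subseteq> sets M" and fi: "integrable M f" and gi: "integrable M g"
    and eqG: "\<And>E. E \<in> G \<Longrightarrow> (\<integral>x\<in>E. f x \<partial>M) = (\<integral>x\<in>E. g x \<partial>M)"
    and E: "E \<in> sigma_sets (space M) G"
  shows "(\<integral>x\<in>E. f x \<partial>M) = (\<integral>x\<in>E. g x \<partial>M)"
proof -
  have SM: "sigma_sets (space M) G \<subseteq> sets M" using GM by (simp add: sets.sigma_sets_subset)
  have whole: "integral\<^sup>L M f = integral\<^sup>L M g"
    using eqG[OF top] set_integral_space[OF fi] set_integral_space[OF gi] by simp
  from IS GP E show ?thesis
  proof (induction rule: sigma_sets_induct_disjoint)
    case (basic A) then show ?case by (rule eqG)
  next
    case empty then show ?case by (simp add: set_lebesgue_integral_def)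
  next
    case (compl A)
    have A: "A \<in> sets M" using compl SM by auto
    have complement: "(\<integral>x\<in>space M - A. h x \<partial>M) = integral\<^sup>L M h - (\<integral>x\<in>A. h x \<partial>M)"
      if hi: "integrable M h" for h :: "'a \<Rightarrow> real"
    proof -
      have "(\<integral>x\<in>space M - A. h x \<partial>M) = (\<integral>x. h x - indicator A x * h x \<partial>M)"
        unfolding set_lebesgue_integral_def
        by (rule Bochner_Integration.integral_cong) (auto simp: indicator_def)
      also have "\<dots> = integral\<^sup>L M h - (\<integral>x. indicator A x * h x \<partial>M)"
        using hi integrable_mult_indicator[OF A hi] by (intro Bochner_Integration.integral_diff) auto
      finally show ?thesis by (simp add: set_lebesgue_integral_def)
    qed
    show ?case using complement[OF fi] complement[OF gi] compl.IH whole by simp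
  next
    case (union A)
    have A: "\<And>i. A i \<in> sets M" using union SM by auto
    have disj: "\<And>i j. i \<noteq> j \<Longrightarrow> A i \<inter> A j = {}"
      using union(1) by (auto simp: disjoint_family_on_def)
    have U: "(\<Union>i. A i) \<in> sets M" using A by auto
    have sif: "set_integrable M (\<Union>i. A i) f" and sig: "set_integrable M (\<Union>i. A i) g"
      unfolding set_integrable_def using integrable_mult_indicator[OF U fi] integrable_mult_indicator[OF U gi]
      by simp_all
    have "(\<integral>x\<in>(\<Union>i. A i). f x \<partial>M) = (\<Sum>i. (\<integral>x\<in>A i. f x \<partial>M))"
      and "(\<integral>x\<in>(\<Union>i. A i). g x \<partial>M) = (\<Sum>i. (\<integral>x\<in>A i. g x \<partial>M))"
      using lebesgue_integral_countable_add[OF A disj sif] lebesgue_integral_countable_add[OF A disj sig]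
      by blast+
    then show ?case using union.IH by simp
  qed
qed

lemma (in sigma_finite_subalgebra) integral_mult_real_cond_exp_bounded:
  assumes "integrable M g" "g \<in> borel_measurable F"
    and "h \<in> borel_measurable M" "AE x in M. \<bar>h x\<bar> \<le> 1"
  shows "(\<integral>x. g x * real_cond_exp M F h x \<partial>M) = (\<integral>x. g x * h x \<partial>M)"
  using integrable_bounded_mult[OF assms(1,3,4)] assms(2,3) by (intro real_cond_exp_intg(2)) (simp add: mult.commute)

lemma (in sigma_finite_subalgebra) real_cond_exp_eq_if_finer:
  assumes "subalgebra M J" "subalgebra J F" "integrable M f"
    and "AE x in M. real_cond_exp M J f x = q x" "integrable M q" "q \<in> borel_measurable F"
  shows "AE x in M. real_cond_exp M F f x = q x"
proof -
  have "AE x in M. real_cond_exp M F (real_cond_exp M J f) x = real_cond_exp M F f x"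
    using assms(1-3) by (rule real_cond_exp_nested_subalg)
  moreover have "AE x in M. real_cond_exp M F (real_cond_exp M J f) x = real_cond_exp M F q x"
    using assms(4,5) by (intro real_cond_exp_cong) auto
  moreover have "AE x in M. real_cond_exp M F q x = q x"
    using assms(5,6) by (rule real_cond_exp_F_meas)
  ultimately show ?thesis by eventually_elim auto
qed

lemma space_gen_sigma [simp]: "space (gen_sigma M T MT) = space M"
  unfolding gen_sigma_def by simp

lemma sets_gen_sigma:
  assumes "T \<in> measurable M MT"
  shows "sets (gen_sigma M T MT) = {T -` B \<inter> space M | B. B \<in> sets MT}"
  unfolding gen_sigma_def using assms by (intro sets_vimage_algebra2) (auto simp: measurable_def)

lemma subalgebra_gen_sigma:
  assumes "T \<in> measurable M MT"
  shows "subalgebra M (gen_sigma M T MT)"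
  unfolding subalgebra_def using assms by (auto simp: sets_gen_sigma)

lemma measurable_gen_sigma:
  assumes "T \<in> measurable M MT"
  shows "T \<in> measurable (gen_sigma M T MT) MT"
  unfolding gen_sigma_def using assms by (intro measurable_vimage_algebra1) (auto simp: measurable_def)

lemma sets_gen_sigma_subset:
  assumes "T \<in> measurable M MT" "T \<in> measurable N MT" "space N = space M"
  shows "sets (gen_sigma M T MT) \<subseteq> sets N"
  using assms by (auto simp: sets_gen_sigma dest: measurable_sets)

lemma sets_gen_sigma_subset_Pair:
  assumes "T \<in> measurable M MT" "W \<in> measurable M MW"
  shows "sets (gen_sigma M T MT) \<subseteq> sets (gen_sigma M (\<lambda>\<omega>. (T \<omega>, W \<omega>)) (MT \<Otimes>\<^sub>M MW))"
    and "sets (gen_sigma M W MW) \<subseteq> sets (gen_sigma M (\<lambda>\<omega>. (T \<omega>, W \<omega>)) (MT \<Otimes>\<^sub>M MW))"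
proof -
  have TW: "(\<lambda>\<omega>. (T \<omega>, W \<omega>)) \<in> measurable (gen_sigma M (\<lambda>\<omega>. (T \<omega>, W \<omega>)) (MT \<Otimes>\<^sub>M MW)) (MT \<Otimes>\<^sub>M MW)"
    using assms by (intro measurable_gen_sigma measurable_Pair)
  show "sets (gen_sigma M T MT) \<subseteq> sets (gen_sigma M (\<lambda>\<omega>. (T \<omega>, W \<omega>)) (MT \<Otimes>\<^sub>M MW))"
    using measurable_compose[OF TW measurable_fst] by (intro sets_gen_sigma_subset[OF assms(1)]) auto
  show "sets (gen_sigma M W MW) \<subseteq> sets (gen_sigma M (\<lambda>\<omega>. (T \<omega>, W \<omega>)) (MT \<Otimes>\<^sub>M MW))"
    using measurable_compose[OF TW measurable_snd] by (intro sets_gen_sigma_subset[OF assms(2)]) auto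
qed

lemma borel_measurable_cond_exp_vec: "cond_exp_vec M F X \<in> borel_measurable F"
  unfolding cond_exp_vec_def by measurable

lemma measurable_comp_restrict_space:
  assumes "g \<in> measurable (restrict_space N \<Omega>) L" "X \<in> measurable M N" "\<And>\<omega>. \<omega> \<in> space M \<Longrightarrow> X \<omega> \<in> \<Omega>"
  shows "(\<lambda>\<omega>. g (X \<omega>)) \<in> measurable M L"
  using measurable_compose[OF measurable_restrict_space2 assms(1), of X M] assms(2,3) by auto

definition join_generators :: "('w \<Rightarrow> 'x) \<Rightarrow> 'x measure \<Rightarrow> 'w measure \<Rightarrow> 'w set set" where
  "join_generators X MX F = {X -` A \<inter> E | A E. A \<in> sets MX \<and> E \<in> sets F}"

definition join_sigma :: "'w measure \<Rightarrow> ('w \<Rightarrow> 'x) \<Rightarrow> 'x measure \<Rightarrow> 'w measure \<Rightarrow> 'w measure" where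
  "join_sigma M X MX F = sigma (space M) (join_generators X MX F)"

lemma Int_stable_join_generators: "Int_stable (join_generators X MX F)"
proof (rule Int_stableI)
  fix a b assume "a \<in> join_generators X MX F" "b \<in> join_generators X MX F"
  then obtain A1 E1 A2 E2 where "A1 \<in> sets MX" "E1 \<in> sets F" "a = X -` A1 \<inter> E1"
    "A2 \<in> sets MX" "E2 \<in> sets F" "b = X -` A2 \<inter> E2" by (auto simp: join_generators_def)
  then have "a \<inter> b = X -` (A1 \<inter> A2) \<inter> (E1 \<inter> E2)" "A1 \<inter> A2 \<in> sets MX" "E1 \<inter> E2 \<in> sets F" by auto
  then show "a \<inter> b \<in> join_generators X MX F" unfolding join_generators_def by blast
qed

context
  fixes M F :: "'w measure" and X :: "'w \<Rightarrow> 'x" and MX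
  assumes sub: "subalgebra M F" and Xm: "X \<in> measurable M MX"
begin

lemma join_generators_subset_sets: "join_generators X MX F \<subseteq> sets M"
proof safe
  fix D assume "D \<in> join_generators X MX F"
  then obtain A E where "A \<in> sets MX" "E \<in> sets F" "D = X -` A \<inter> E" by (auto simp: join_generators_def)
  moreover have "E \<in> sets M" "E \<subseteq> space M"
    using \<open>E \<in> sets F\<close> sub sets.sets_into_space[of E F] by (auto simp: subalgebra_def)
  ultimately show "D \<in> sets M"
    using Xm by (metis Int_assoc inf.absorb_iff2 measurable_sets sets.Int)
qed

lemma join_generators_subset_Pow: "join_generators X MX F \<subseteq> Pow (space M)"
  using join_generators_subset_sets sets.sets_into_space by blast

lemma space_in_join_generators: "space M \<in> join_generators X MX F"
proof -
  have "space M = X -` space MX \<inter> space M" using Xm by (auto simp: measurable_def)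
  moreover have "space M \<in> sets F" using sub by (metis sets.top subalgebra_def)
  ultimately show ?thesis unfolding join_generators_def by blast
qed

lemma space_join_sigma [simp]: "space (join_sigma M X MX F) = space M"
  unfolding join_sigma_def using join_generators_subset_Pow by simp

lemma sets_join_sigma: "sets (join_sigma M X MX F) = sigma_sets (space M) (join_generators X MX F)"
  unfolding join_sigma_def using join_generators_subset_Pow by simp

lemma subalgebra_join_sigma: "subalgebra M (join_sigma M X MX F)"
  unfolding subalgebra_def using join_generators_subset_sets
  by (simp add: sets_join_sigma sets.sigma_sets_subset)

lemma subalgebra_join_sigma_right: "subalgebra (join_sigma M X MX F) F"
proof -
  have "E \<in> sets (join_sigma M X MX F)" if E: "E \<in> sets F" for E
  proof -
    have "E \<subseteq> space M" using sub sets.sets_into_space[OF E] by (auto simp: subalgebra_def)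
    then have "E = X -` space MX \<inter> E" using Xm by (auto simp: measurable_def)
    then show ?thesis using E unfolding sets_join_sigma join_generators_def by blast
  qed
  then show ?thesis using sub by (auto simp: subalgebra_def)
qed

lemma measurable_join_sigma_left: "X \<in> measurable (join_sigma M X MX F) MX"
proof (rule measurableI)
  show "\<omega> \<in> space (join_sigma M X MX F) \<Longrightarrow> X \<omega> \<in> space MX" for \<omega>
    using Xm by (auto simp: measurable_def)
  fix A assume "A \<in> sets MX"
  moreover have "space M \<in> sets F" using sub by (metis sets.top subalgebra_def)
  ultimately show "X -` A \<inter> space (join_sigma M X MX F) \<in> sets (join_sigma M X MX F)"
    unfolding sets_join_sigma join_generators_def by auto
qed

end

lemma sets_join_sigma_subset:
  assumes "subalgebra M H" "Y \<in> measurable M MY" "Y \<in> measurable N MY" "space N = space M"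
    and "sets H \<subseteq> sets N"
  shows "sets (join_sigma M Y MY H) \<subseteq> sets N"
proof -
  have "join_generators Y MY H \<subseteq> sets N"
  proof safe
    fix D assume "D \<in> join_generators Y MY H"
    then obtain A E where A: "A \<in> sets MY" and E: "E \<in> sets H" and D: "D = Y -` A \<inter> E"
      by (auto simp: join_generators_def)
    have "E \<subseteq> space N" using assms(1,4) sets.sets_into_space[OF E] by (auto simp: subalgebra_def)
    then have "D = (Y -` A \<inter> space N) \<inter> E" using D by auto
    then show "D \<in> sets N" using A E assms(3,5) by (auto intro!: measurable_sets)
  qed
  then show ?thesis
    using sets.sigma_sets_subset[of _ N] sets_join_sigma[OF assms(1,2)] assms(4) by simp
qed

lemma measurable_join_sigma_add:
  fixes R V :: "'w \<Rightarrow> 'a::{second_countable_topology, topological_monoid_add}"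
  assumes "subalgebra M H" "R \<in> borel_measurable M" "V \<in> borel_measurable H"
  shows "(\<lambda>\<omega>. R \<omega> + V \<omega>) \<in> borel_measurable (join_sigma M R borel H)"
  using measurable_join_sigma_left[OF assms(1,2)]
    measurable_from_subalg[OF subalgebra_join_sigma_right[OF assms(1,2)] assms(3)]
  by (rule borel_measurable_add)

lemma cond_indep_set_integral_eq:
  assumes "prob_space M" and [measurable]: "X \<in> measurable M MX" "Z \<in> measurable M MZ"
    and sub: "subalgebra M F" and ci: "cond_indep M F X MX Z MZ"
    and A[measurable]: "A \<in> sets MX" and E[measurable]: "E \<in> sets F" and B[measurable]: "B \<in> sets MZ"
  shows "(\<integral>x\<in>X -` A \<inter> E. indicator B (Z x) \<partial>M)
       = (\<integral>x\<in>X -` A \<inter> E. real_cond_exp M F (\<lambda>\<eta>. indicator B (Z \<eta>)) x \<partial>M)"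
proof -
  interpret prob_space M by fact
  interpret F: sigma_finite_subalgebra M F by (rule prob_space_sigma_finite_subalgebra[OF assms(1) sub])
  define p where "p = real_cond_exp M F (\<lambda>\<eta>. indicator A (X \<eta>) :: real)"
  define q where "q = real_cond_exp M F (\<lambda>\<eta>. indicator B (Z \<eta>) :: real)"
  have [measurable]: "E \<in> sets M" using sub E by (auto simp: subalgebra_def)
  have [measurable]: "q \<in> borel_measurable F" unfolding q_def by simp
  have qi: "integrable M q"
    unfolding q_def by (intro F.real_cond_exp_int(1) integrable_const_bound[where B=1]) auto
  have "(\<integral>x\<in>X -` A \<inter> E. indicator B (Z x) \<partial>M)
      = (\<integral>x\<in>E. indicator A (X x) * (indicator B (Z x) :: real) \<partial>M)"
    unfolding set_lebesgue_integral_def by (rule Bochner_Integration.integral_cong) (auto simp: indicator_def)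
  also have "\<dots> = (\<integral>x\<in>E. real_cond_exp M F (\<lambda>\<eta>. indicator A (X \<eta>) * indicator B (Z \<eta>)) x \<partial>M)"
    by (intro F.real_cond_exp_intA integrable_const_bound[where B=1] E) (auto simp: indicator_def)
  also have "\<dots> = (\<integral>x\<in>E. p x * q x \<partial>M)"
  proof -
    have "AE \<omega> in M. real_cond_exp M F (\<lambda>\<eta>. indicator A (X \<eta>) * indicator B (Z \<eta>)) \<omega> = p \<omega> * q \<omega>"
      using ci A B unfolding cond_indep_def p_def q_def by blast
    then show ?thesis unfolding set_lebesgue_integral_def p_def q_def by (intro integral_cong_AE) auto
  qed
  also have "\<dots> = (\<integral>x. (indicator E x * q x) * p x \<partial>M)"
    unfolding set_lebesgue_integral_def by (simp add: ac_simps)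
  also have "\<dots> = (\<integral>x. (indicator E x * q x) * indicator A (X x) \<partial>M)"
    unfolding p_def using integrable_bounded_mult[OF qi, of "indicator E"]
    by (intro F.integral_mult_real_cond_exp_bounded) (auto simp: indicator_def)
  also have "\<dots> = (\<integral>x\<in>X -` A \<inter> E. q x \<partial>M)"
    unfolding set_lebesgue_integral_def by (rule Bochner_Integration.integral_cong) (auto simp: indicator_def)
  finally show ?thesis unfolding q_def .
qed

lemma cond_indep_imp_real_cond_exp_join_eq:
  assumes "prob_space M" and Xm[measurable]: "X \<in> measurable M MX" and [measurable]: "Z \<in> measurable M MZ"
    and sub: "subalgebra M F" and ci: "cond_indep M F X MX Z MZ" and B[measurable]: "B \<in> sets MZ"
  shows "AE \<omega> in M. real_cond_exp M (join_sigma M X MX F) (\<lambda>\<eta>. indicator B (Z \<eta>)) \<omega>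
                   = real_cond_exp M F (\<lambda>\<eta>. indicator B (Z \<eta>)) \<omega>"
proof -
  interpret prob_space M by fact
  interpret J: sigma_finite_subalgebra M "join_sigma M X MX F"
    by (rule prob_space_sigma_finite_subalgebra[OF assms(1) subalgebra_join_sigma[OF sub Xm]])
  interpret F: sigma_finite_subalgebra M F by (rule prob_space_sigma_finite_subalgebra[OF assms(1) sub])
  have fi: "integrable M (\<lambda>\<eta>. indicator B (Z \<eta>) :: real)" by (rule integrable_const_bound[where B=1]) auto
  show ?thesis
  proof (rule J.real_cond_exp_charact)
    fix D assume "D \<in> sets (join_sigma M X MX F)"
    then have D: "D \<in> sigma_sets (space M) (join_generators X MX F)" by (simp add: sets_join_sigma[OF sub Xm])
    show "(\<integral>x\<in>D. indicator B (Z x) \<partial>M) = (\<integral>x\<in>D. real_cond_exp M F (\<lambda>\<eta>. indicator B (Z \<eta>)) x \<partial>M)"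
      by (rule set_integral_eq_on_sigma_sets[OF Int_stable_join_generators
            join_generators_subset_Pow[OF sub Xm] space_in_join_generators[OF sub Xm]
            join_generators_subset_sets[OF sub Xm] fi F.real_cond_exp_int(1)[OF fi] _ D])
        (auto simp: join_generators_def intro: cond_indep_set_integral_eq[OF assms(1-5) _ _ B])
  qed (use fi measurable_from_subalg[OF subalgebra_join_sigma_right[OF sub Xm] borel_measurable_cond_exp]
      in auto)
qed

lemma cond_indep_if_real_cond_exp_join_eq:
  assumes "prob_space M" and Xm[measurable]: "X \<in> measurable M MX" and [measurable]: "Z \<in> measurable M MZ"
    and sub: "subalgebra M F"
    and eq: "\<And>B. B \<in> sets MZ \<Longrightarrow> AE \<omega> in M.
               real_cond_exp M (join_sigma M X MX F) (\<lambda>\<eta>. indicator B (Z \<eta>)) \<omega>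
             = real_cond_exp M F (\<lambda>\<eta>. indicator B (Z \<eta>)) \<omega>"
  shows "cond_indep M F X MX Z MZ"
  unfolding cond_indep_def
proof (intro ballI)
  interpret prob_space M by fact
  interpret J: sigma_finite_subalgebra M "join_sigma M X MX F"
    by (rule prob_space_sigma_finite_subalgebra[OF assms(1) subalgebra_join_sigma[OF sub Xm]])
  interpret F: sigma_finite_subalgebra M F by (rule prob_space_sigma_finite_subalgebra[OF assms(1) sub])
  have [measurable]: "X \<in> measurable (join_sigma M X MX F) MX" by (rule measurable_join_sigma_left[OF sub Xm])
  fix A B assume A[measurable]: "A \<in> sets MX" and B[measurable]: "B \<in> sets MZ"
  define p where "p = real_cond_exp M F (\<lambda>\<eta>. indicator A (X \<eta>) :: real)"
  define q where "q = real_cond_exp M F (\<lambda>\<eta>. indicator B (Z \<eta>) :: real)"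
  have [measurable]: "p \<in> borel_measurable F" "q \<in> borel_measurable F" unfolding p_def q_def by simp_all
  have pM: "p \<in> borel_measurable M" by (rule measurable_from_subalg[OF sub]) simp
  have ai: "integrable M (\<lambda>\<eta>. indicator A (X \<eta>) :: real)" by (rule integrable_const_bound[where B=1]) auto
  have qi: "integrable M q"
    unfolding q_def by (intro F.real_cond_exp_int(1) integrable_const_bound[where B=1]) auto
  have "AE x in M. 0 \<le> p x" "AE x in M. p x \<le> 1"
    unfolding p_def by (intro F.real_cond_exp_ge_c F.real_cond_exp_le_c ai; simp)+
  then have pb: "AE x in M. \<bar>p x\<bar> \<le> 1" by eventually_elim auto
  have "AE \<omega> in M. real_cond_exp M F (\<lambda>\<eta>. indicator A (X \<eta>) * indicator B (Z \<eta>)) \<omega> = p \<omega> * q \<omega>"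
  proof (rule F.real_cond_exp_charact)
    fix E assume E[measurable]: "E \<in> sets F"
    have [measurable]: "E \<in> sets M" using sub E by (auto simp: subalgebra_def)
    have [measurable]: "E \<in> sets (join_sigma M X MX F)"
      using subalgebra_join_sigma_right[OF sub Xm] E by (auto simp: subalgebra_def)
    have "(\<integral>x\<in>E. indicator A (X x) * (indicator B (Z x) :: real) \<partial>M)
        = (\<integral>x. (indicator E x * indicator A (X x)) * indicator B (Z x) \<partial>M)"
      unfolding set_lebesgue_integral_def by (simp add: mult.assoc)
    also have "\<dots> = (\<integral>x. (indicator E x * indicator A (X x)) *
                      real_cond_exp M (join_sigma M X MX F) (\<lambda>\<eta>. indicator B (Z \<eta>)) x \<partial>M)"
      by (intro J.integral_mult_real_cond_exp_bounded[symmetric] integrable_const_bound[where B=1])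
        (auto simp: indicator_def)
    also have "\<dots> = (\<integral>x. (indicator E x * indicator A (X x)) * q x \<partial>M)"
      using eq[OF B] unfolding q_def by (intro integral_cong_AE) auto
    also have "\<dots> = (\<integral>x. (indicator E x * q x) * indicator A (X x) \<partial>M)" by (simp add: ac_simps)
    also have "\<dots> = (\<integral>x. (indicator E x * q x) * p x \<partial>M)"
      unfolding p_def using integrable_bounded_mult[OF qi, of "indicator E"]
      by (intro F.integral_mult_real_cond_exp_bounded[symmetric]) (auto simp: indicator_def)
    also have "\<dots> = (\<integral>x\<in>E. p x * q x \<partial>M)"
      unfolding set_lebesgue_integral_def by (simp add: ac_simps)
    finally show "(\<integral>x\<in>E. indicator A (X x) * indicator B (Z x) \<partial>M) = (\<integral>x\<in>E. p x * q x \<partial>M)" .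
  qed (use integrable_bounded_mult[OF qi pM pb] in \<open>auto intro!: integrable_const_bound[where B=1] simp: indicator_def\<close>)
  then show "AE \<omega> in M. real_cond_exp M F (\<lambda>\<eta>. indicator A (X \<eta>) * indicator B (Z \<eta>)) \<omega> =
      real_cond_exp M F (\<lambda>\<eta>. indicator A (X \<eta>)) \<omega> * real_cond_exp M F (\<lambda>\<eta>. indicator B (Z \<eta>)) \<omega>"
    by (simp add: p_def q_def)
qed

lemma cond_indep_sym: "cond_indep M F X MX Z MZ \<Longrightarrow> cond_indep M F Z MZ X MX"
  unfolding cond_indep_def by (auto simp: mult.commute)

lemma cond_indep_compose_right:
  assumes ci: "cond_indep M F X MX Z MZ" and g: "g \<in> measurable MZ MZ'" and "space MZ = UNIV"
  shows "cond_indep M F X MX (\<lambda>\<omega>. g (Z \<omega>)) MZ'"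
  unfolding cond_indep_def
proof (intro ballI)
  fix A B assume "A \<in> sets MX" "B \<in> sets MZ'"
  moreover have "g -` B \<in> sets MZ" using measurable_sets[OF g \<open>B \<in> sets MZ'\<close>] assms(3) by simp
  ultimately show "AE \<omega> in M. real_cond_exp M F (\<lambda>\<eta>. indicator A (X \<eta>) * indicator B (g (Z \<eta>))) \<omega> =
      real_cond_exp M F (\<lambda>\<eta>. indicator A (X \<eta>)) \<omega> * real_cond_exp M F (\<lambda>\<eta>. indicator B (g (Z \<eta>))) \<omega>"
    using ci unfolding cond_indep_def indicator_vimage[symmetric] by blast
qed

lemma cond_indep_weak_union:
  assumes "prob_space M" and [measurable]: "X \<in> measurable M MX" and Zm[measurable]: "Z \<in> measurable M MZ"
    and subF: "subalgebra M F" and subH: "subalgebra M H"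
    and FH: "sets F \<subseteq> sets H" and HJ: "sets H \<subseteq> sets (join_sigma M Z MZ F)"
    and ci: "cond_indep M F X MX Z MZ"
  shows "cond_indep M H X MX Z MZ"
proof -
  interpret prob_space M by fact
  let ?J1 = "join_sigma M Z MZ F" and ?J2 = "join_sigma M Z MZ H"
  have J21: "sets ?J2 \<subseteq> sets ?J1"
    using sets_join_sigma_subset[OF subH Zm measurable_join_sigma_left[OF subF Zm] _ HJ] subF Zm by simp
  have subJ1: "subalgebra M ?J1" by (rule subalgebra_join_sigma[OF subF Zm])
  have subJ1J2: "subalgebra ?J1 ?J2" using J21 subF subH Zm by (simp add: subalgebra_def)
  have subJ1H: "subalgebra ?J1 H" using HJ subF subH Zm by (simp add: subalgebra_def)
  have subJ2F: "subalgebra ?J2 F" using FH subalgebra_join_sigma_right[OF subH Zm] subF subH Zm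
    by (auto simp: subalgebra_def)
  have subHF: "subalgebra H F" using FH subF subH by (auto simp: subalgebra_def)
  interpret J2: sigma_finite_subalgebra M ?J2
    by (rule prob_space_sigma_finite_subalgebra[OF assms(1) subalgebra_join_sigma[OF subH Zm]])
  interpret H: sigma_finite_subalgebra M H by (rule prob_space_sigma_finite_subalgebra[OF assms(1) subH])
  interpret F: sigma_finite_subalgebra M F by (rule prob_space_sigma_finite_subalgebra[OF assms(1) subF])
  have "AE \<omega> in M. real_cond_exp M ?J2 (\<lambda>\<eta>. indicator A (X \<eta>)) \<omega>
                   = real_cond_exp M H (\<lambda>\<eta>. indicator A (X \<eta>)) \<omega>" if A[measurable]: "A \<in> sets MX" for A
  proof -
    define p where "p = real_cond_exp M F (\<lambda>\<eta>. indicator A (X \<eta>) :: real)"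
    have fi: "integrable M (\<lambda>\<eta>. indicator A (X \<eta>) :: real)" by (rule integrable_const_bound[where B=1]) auto
    have pi: "integrable M p" unfolding p_def by (rule F.real_cond_exp_int(1)[OF fi])
    have pF: "p \<in> borel_measurable F" unfolding p_def by simp
    have J1: "AE \<omega> in M. real_cond_exp M ?J1 (\<lambda>\<eta>. indicator A (X \<eta>)) \<omega> = p \<omega>"
      unfolding p_def by (rule cond_indep_imp_real_cond_exp_join_eq[OF assms(1) Zm _ subF cond_indep_sym[OF ci] A]) simp
    have "AE \<omega> in M. real_cond_exp M ?J2 (\<lambda>\<eta>. indicator A (X \<eta>)) \<omega> = p \<omega>"
      by (rule J2.real_cond_exp_eq_if_finer[OF subJ1 subJ1J2 fi J1 pi measurable_from_subalg[OF subJ2F pF]])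
    moreover have "AE \<omega> in M. real_cond_exp M H (\<lambda>\<eta>. indicator A (X \<eta>)) \<omega> = p \<omega>"
      by (rule H.real_cond_exp_eq_if_finer[OF subJ1 subJ1H fi J1 pi measurable_from_subalg[OF subHF pF]])
    ultimately show ?thesis by eventually_elim simp
  qed
  then have "cond_indep M H Z MZ X MX" by (intro cond_indep_if_real_cond_exp_join_eq[OF assms(1) Zm _ subH]) auto
  then show ?thesis by (rule cond_indep_sym)
qed

lemma cond_indep_join_measurable:
  assumes "prob_space M" and Xm[measurable]: "X \<in> measurable M MX" and [measurable]: "Z \<in> measurable M MZ"
    and subH: "subalgebra M H" and ci: "cond_indep M H X MX Z MZ"
    and X'J: "X' \<in> measurable (join_sigma M X MX H) MX'"
  shows "cond_indep M H X' MX' Z MZ"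
proof -
  interpret prob_space M by fact
  let ?J = "join_sigma M X MX H" and ?J' = "join_sigma M X' MX' H"
  have subJ: "subalgebra M ?J" by (rule subalgebra_join_sigma[OF subH Xm])
  have X'm: "X' \<in> measurable M MX'" by (rule measurable_from_subalg[OF subJ X'J])
  have "sets ?J' \<subseteq> sets ?J"
    using sets_join_sigma_subset[OF subH X'm X'J _ ] subalgebra_join_sigma_right[OF subH Xm] subH Xm
    by (simp add: subalgebra_def)
  then have subJJ': "subalgebra ?J ?J'" using subH Xm X'm by (simp add: subalgebra_def)
  interpret J': sigma_finite_subalgebra M ?J'
    by (rule prob_space_sigma_finite_subalgebra[OF assms(1) subalgebra_join_sigma[OF subH X'm]])
  interpret H: sigma_finite_subalgebra M H by (rule prob_space_sigma_finite_subalgebra[OF assms(1) subH])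
  show ?thesis
  proof (rule cond_indep_if_real_cond_exp_join_eq[OF assms(1) X'm _ subH])
    fix B assume B[measurable]: "B \<in> sets MZ"
    have fi: "integrable M (\<lambda>\<eta>. indicator B (Z \<eta>) :: real)" by (rule integrable_const_bound[where B=1]) auto
    show "AE \<omega> in M. real_cond_exp M ?J' (\<lambda>\<eta>. indicator B (Z \<eta>)) \<omega>
                     = real_cond_exp M H (\<lambda>\<eta>. indicator B (Z \<eta>)) \<omega>"
      using cond_indep_imp_real_cond_exp_join_eq[OF assms(1) Xm _ subH ci B] H.real_cond_exp_int(1)[OF fi]
        measurable_from_subalg[OF subalgebra_join_sigma_right[OF subH X'm] borel_measurable_cond_exp]
      by (intro J'.real_cond_exp_eq_if_finer[OF subJ subJJ' fi]) auto
  qed simp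
qed

lemma cond_indep_weak_union_gen_sigma:
  assumes "prob_space M"
    and Rm: "R \<in> measurable M MR" and Zm: "Z \<in> measurable M MZ" and Wm: "W \<in> measurable M MW"
    and TJ: "T \<in> measurable (join_sigma M Z MZ (gen_sigma M W MW)) MT"
    and ci: "cond_indep M (gen_sigma M W MW) R MR Z MZ"
    and YJ: "Y \<in> measurable (join_sigma M R MR (gen_sigma M (\<lambda>\<omega>. (T \<omega>, W \<omega>)) (MT \<Otimes>\<^sub>M MW))) MY"
  shows "cond_indep M (gen_sigma M (\<lambda>\<omega>. (T \<omega>, W \<omega>)) (MT \<Otimes>\<^sub>M MW)) Y MY Z MZ"
proof -
  let ?F = "gen_sigma M W MW" and ?H = "gen_sigma M (\<lambda>\<omega>. (T \<omega>, W \<omega>)) (MT \<Otimes>\<^sub>M MW)"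
  have subF: "subalgebra M ?F" by (rule subalgebra_gen_sigma[OF Wm])
  have Tm: "T \<in> measurable M MT" by (rule measurable_from_subalg[OF subalgebra_join_sigma[OF subF Zm] TJ])
  have TWm: "(\<lambda>\<omega>. (T \<omega>, W \<omega>)) \<in> measurable M (MT \<Otimes>\<^sub>M MW)" using Tm Wm by (rule measurable_Pair)
  have subH: "subalgebra M ?H" by (rule subalgebra_gen_sigma[OF TWm])
  have WJ: "W \<in> measurable (join_sigma M Z MZ ?F) MW"
    by (rule measurable_from_subalg[OF subalgebra_join_sigma_right[OF subF Zm] measurable_gen_sigma[OF Wm]])
  have HJ: "sets ?H \<subseteq> sets (join_sigma M Z MZ ?F)"
    using sets_gen_sigma_subset[OF TWm measurable_Pair[OF TJ WJ]] subF Zm by simp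
  have "cond_indep M ?H R MR Z MZ"
    by (rule cond_indep_weak_union[OF assms(1) Rm Zm subF subH sets_gen_sigma_subset_Pair(2)[OF Tm Wm] HJ ci])
  then show ?thesis by (rule cond_indep_join_measurable[OF assms(1) Rm Zm subH _ YJ])
qed

lemma cond_indep_centred_left:
  fixes Y V :: "'w \<Rightarrow> 'y::{real_normed_vector, second_countable_topology}"
  assumes "prob_space M"
    and Ym: "Y \<in> borel_measurable M" and Zm: "Z \<in> measurable M MZ" and Wm: "W \<in> measurable M MW"
    and TJ: "T \<in> measurable (join_sigma M Z MZ (gen_sigma M W MW)) MT"
    and VH: "V \<in> borel_measurable (gen_sigma M (\<lambda>\<omega>. (T \<omega>, W \<omega>)) (MT \<Otimes>\<^sub>M MW))"
    and ci: "cond_indep M (gen_sigma M W MW) (\<lambda>\<omega>. Y \<omega> - V \<omega>) borel Z MZ"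
  shows "cond_indep M (gen_sigma M (\<lambda>\<omega>. (T \<omega>, W \<omega>)) (MT \<Otimes>\<^sub>M MW)) Y borel Z MZ"
proof -
  let ?H = "gen_sigma M (\<lambda>\<omega>. (T \<omega>, W \<omega>)) (MT \<Otimes>\<^sub>M MW)"
  have "T \<in> measurable M MT"
    using measurable_from_subalg[OF subalgebra_join_sigma[OF subalgebra_gen_sigma[OF Wm] Zm] TJ] .
  then have subH: "subalgebra M ?H" using Wm by (intro subalgebra_gen_sigma measurable_Pair)
  have Rm: "(\<lambda>\<omega>. Y \<omega> - V \<omega>) \<in> borel_measurable M"
    using Ym measurable_from_subalg[OF subH VH] by simp
  have "Y \<in> borel_measurable (join_sigma M (\<lambda>\<omega>. Y \<omega> - V \<omega>) borel ?H)"
    using measurable_join_sigma_add[OF subH Rm VH] by simp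
  then show ?thesis by (rule cond_indep_weak_union_gen_sigma[OF assms(1) Rm Zm Wm TJ ci])
qed

lemma cond_indep_centred_right:
  fixes X V :: "'w \<Rightarrow> 'x::{real_normed_vector, second_countable_topology}"
    and Y :: "'w \<Rightarrow> 'y::second_countable_topology" and T :: "'w \<Rightarrow> 't::second_countable_topology"
  assumes "prob_space M"
    and Xm: "X \<in> borel_measurable M" and Ym: "Y \<in> borel_measurable M" and Tm: "T \<in> borel_measurable M"
    and Wm: "W \<in> measurable M MW"
    and VH: "V \<in> borel_measurable (gen_sigma M (\<lambda>\<omega>. (T \<omega>, W \<omega>)) (borel \<Otimes>\<^sub>M MW))"
    and ci: "cond_indep M (gen_sigma M W MW) (\<lambda>\<omega>. X \<omega> - V \<omega>) borel (\<lambda>\<omega>. (Y \<omega>, T \<omega>)) borel"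
  shows "cond_indep M (gen_sigma M (\<lambda>\<omega>. (T \<omega>, W \<omega>)) (borel \<Otimes>\<^sub>M MW)) Y borel X borel"
proof -
  have YTm: "(\<lambda>\<omega>. (Y \<omega>, T \<omega>)) \<in> borel_measurable M" using Ym Tm by simp
  have "(\<lambda>\<omega>. (Y \<omega>, T \<omega>))
      \<in> measurable (join_sigma M (\<lambda>\<omega>. (Y \<omega>, T \<omega>)) borel (gen_sigma M W MW)) (borel \<Otimes>\<^sub>M borel)"
    using measurable_join_sigma_left[OF subalgebra_gen_sigma[OF Wm] YTm] by (simp add: borel_prod)
  then have "T \<in> borel_measurable (join_sigma M (\<lambda>\<omega>. (Y \<omega>, T \<omega>)) borel (gen_sigma M W MW))"
    using measurable_compose[OF _ measurable_snd] by fastforce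
  then have ci_YT: "cond_indep M (gen_sigma M (\<lambda>\<omega>. (T \<omega>, W \<omega>)) (borel \<Otimes>\<^sub>M MW))
      X borel (\<lambda>\<omega>. (Y \<omega>, T \<omega>)) borel"
    by (rule cond_indep_centred_left[OF assms(1) Xm YTm Wm _ VH ci])
  have fst_meas: "fst \<in> measurable (borel :: ('y \<times> 't) measure) borel"
    using measurable_fst[of "borel :: 'y measure" "borel :: 't measure"] by (simp add: borel_prod)
  show ?thesis
    using cond_indep_compose_right[OF ci_YT fst_meas] by (simp add: cond_indep_sym)
qed

theorem lemma3p4:
  fixes M :: "'w measure"
    and S :: "nat \<Rightarrow> 'w \<Rightarrow> real^'p"
    and A :: "nat \<Rightarrow> 'w \<Rightarrow> nat"
    and Sset :: "(real^'p) set"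
    and K :: nat
    and U :: "real^'p \<Rightarrow> nat \<Rightarrow> real^'p \<Rightarrow> real"
    and Mb :: real
    and P :: "nat \<Rightarrow> real^'p \<Rightarrow> (real^'p) set \<Rightarrow> real"
    and Sstar :: "nat \<Rightarrow> nat list \<Rightarrow> 'w \<Rightarrow> real^'p"
    and \<epsilon> :: real
    and \<phi> :: "real^'p \<Rightarrow> real^'q"
    and t :: nat
  assumes prob: "prob_space M"
    and S_meas: "\<And>i. S i \<in> borel_measurable M"
    and S_int: "\<And>i. integrable M (S i)"
    and S_in: "\<And>i \<omega>. \<omega> \<in> space M \<Longrightarrow> S i \<omega> \<in> Sset"
    and A_meas: "\<And>i. A i \<in> measurable M (count_space UNIV)"
    and A_in: "\<And>i \<omega>. \<omega> \<in> space M \<Longrightarrow> A i \<omega> \<in> {1..K}"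
    and U_meas: "(\<lambda>(s, a, s'). U s a s') \<in> borel_measurable (borel \<Otimes>\<^sub>M count_space UNIV \<Otimes>\<^sub>M borel)"
    and U_bdd: "AE \<omega> in M. \<forall>i. \<bar>U (S i \<omega>) (A i \<omega>) (S (Suc i) \<omega>)\<bar> \<le> Mb"
    \<comment> \<open>(A0): Markov property with time-homogeneous transition kernel P\<close>
    and A0: "\<And>i G. 1 \<le> i \<Longrightarrow> G \<in> sets borel \<Longrightarrow>
              AE \<omega> in M. real_cond_exp M (hist_sigma M S A i i) (\<lambda>\<eta>. indicator G (S (Suc i) \<eta>)) \<omega>
                            = P (A i \<omega>) (S i \<omega>) G"
    \<comment> \<open>potential states\<close>
    and Sstar_meas: "\<And>s abar. Sstar s abar \<in> borel_measurable M"
    \<comment> \<open>(C1) consistency\<close>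
    and C1: "\<And>i. 1 \<le> i \<Longrightarrow> AE \<omega> in M. S i \<omega> = Sstar i (map (\<lambda>j. A j \<omega>) [1..<i]) \<omega>"
    \<comment> \<open>(C2) positivity\<close>
    and eps_pos: "\<epsilon> > 0"
    and C2: "\<And>i a. 1 \<le> i \<Longrightarrow> a \<in> {1..K} \<Longrightarrow>
              AE \<omega> in M. real_cond_exp M (hist_sigma M S A i (i - 1)) (\<lambda>\<eta>. indicator {a} (A i \<eta>)) \<omega> \<ge> \<epsilon>"
    \<comment> \<open>(C3) sequential ignorability\<close>
    and C3: "\<And>i. 1 \<le> i \<Longrightarrow>
              cond_indep M (hist_sigma M S A i (i - 1))
                (\<lambda>\<omega>. \<lambda>k\<in>pot_index K. Sstar (fst k) (snd k) \<omega>) (Pi\<^sub>M (pot_index K) (\<lambda>_. borel))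
                (A i) (count_space UNIV)"
    and phi_meas: "\<phi> \<in> borel_measurable (restrict_space borel Sset)"
    and t_pos: "1 \<le> t"
    and alt: "cond_indep M (gen_sigma M (A t) (count_space UNIV))
                (\<lambda>\<omega>. (U (S t \<omega>) (A t \<omega>) (S (Suc t) \<omega>), S (Suc t) \<omega>)
                   - cond_exp_vec M (gen_sigma M (\<lambda>\<eta>. (\<phi> (S t \<eta>), A t \<eta>)) (borel \<Otimes>\<^sub>M count_space UNIV))
                       (\<lambda>\<eta>. (U (S t \<eta>) (A t \<eta>) (S (Suc t) \<eta>), S (Suc t) \<eta>)) \<omega>) borel
                (S t) borel
            \<or> cond_indep M (gen_sigma M (A t) (count_space UNIV))
                (\<lambda>\<omega>. S t \<omega> - cond_exp_vec M (gen_sigma M (\<lambda>\<eta>. \<phi> (S t \<eta>)) borel) (S t) \<omega>) borel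
                (\<lambda>\<omega>. ((U (S t \<omega>) (A t \<omega>) (S (Suc t) \<omega>), S (Suc t) \<omega>), \<phi> (S t \<omega>))) borel"
  shows "cond_indep M (gen_sigma M (\<lambda>\<omega>. (\<phi> (S t \<omega>), A t \<omega>)) (borel \<Otimes>\<^sub>M count_space UNIV))
           (\<lambda>\<omega>. (U (S t \<omega>) (A t \<omega>) (S (Suc t) \<omega>), S (Suc t) \<omega>)) borel
           (S t) borel"
proof -
  note [measurable] = S_meas A_meas
  let ?Y = "\<lambda>\<omega>. (U (S t \<omega>) (A t \<omega>) (S (Suc t) \<omega>), S (Suc t) \<omega>)"
  let ?H = "gen_sigma M (\<lambda>\<omega>. (\<phi> (S t \<omega>), A t \<omega>)) (borel \<Otimes>\<^sub>M count_space UNIV)"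
  have phiS: "(\<lambda>\<omega>. \<phi> (S t \<omega>)) \<in> borel_measurable N" if "S t \<in> borel_measurable N" "space N = space M" for N
    using measurable_comp_restrict_space[OF phi_meas that(1)] S_in that(2) by simp
  have Ym: "?Y \<in> borel_measurable M"
    using measurable_compose[OF _ U_meas, of "\<lambda>\<omega>. (S t \<omega>, A t \<omega>, S (Suc t) \<omega>)"] by simp
  have subF: "subalgebra M (gen_sigma M (A t) (count_space UNIV))" by (rule subalgebra_gen_sigma) simp
  have "subalgebra ?H (gen_sigma M (\<lambda>\<omega>. \<phi> (S t \<omega>)) borel)"
    using sets_gen_sigma_subset_Pair(1)[OF phiS[OF S_meas refl] A_meas] by (simp add: subalgebra_def)
  then have V2H: "cond_exp_vec M (gen_sigma M (\<lambda>\<omega>. \<phi> (S t \<omega>)) borel) (S t) \<in> borel_measurable ?H"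
    using borel_measurable_cond_exp_vec by (rule measurable_from_subalg)
  have phiJ: "(\<lambda>\<omega>. \<phi> (S t \<omega>)) \<in> borel_measurable (join_sigma M (S t) borel (gen_sigma M (A t) (count_space UNIV)))"
    using phiS[OF measurable_join_sigma_left[OF subF S_meas] space_join_sigma[OF subF S_meas]] .
  show ?thesis
    using alt cond_indep_centred_left[OF prob Ym S_meas A_meas phiJ borel_measurable_cond_exp_vec]
      cond_indep_centred_right[OF prob S_meas Ym phiS[OF S_meas refl] A_meas V2H]
    by blast
qed

end
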